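(* Let $n\ge p\ge1$, $0<\varepsilon<1$, $\lambda>0$, $\tilde a>0$, and let $\mathrm{St}(p,n)^\varepsilon=\{X\in\mathbb{R}^{n\times p}:\|X^\top X-I_p\|\le\varepsilon\}$. For each $k\ge0$ let $\mathcal{A}_k$ be a map sending $(X_0,\dots,X_k)\in(\mathbb{R}^{n\times p})^{k+1}$ to a skew-symmetric matrix in $\mathbb{R}^{n\times n}$, such that $\|\mathcal{A}_k(X_0,\dots,X_k)X_k\|\le\tilde a$ whenever $X_0,\dots,X_k\in\mathrm{St}(p,n)^\varepsilon$. Let $X_0\in\mathrm{St}(p,n)^\varepsilon$ and define recursively $A_k=\mathcal{A}_k(X_0,\dots,X_k)$ and $X_{k+1}=X_k-\eta_k\big(A_kX_k+\lambda X_k(X_k^\top X_k-I_p)\big)$ with step sizes $\eta_k>0$. If $\eta_k\le\eta^*(\tilde a,\varepsilon,\lambda)$ for all $k$, then $X_k\in\mathrm{St}(p,n)^\varepsilon$ for all $k\ge0$.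
   Context: $\|\cdot\|$ is the Frobenius norm. $\eta^*(\tilde a,\varepsilon,\lambda)=\min\{Q(\lambda,\varepsilon,\tilde a),\frac1{2\lambda}\}$ with $Q(\lambda,\varepsilon,\tilde a)=\inf_{a\in(0,\tilde a],\,d\in(0,\varepsilon]}\frac{\lambda(1-\varepsilon)d+a\sqrt{(\varepsilon-d)/2}}{a^2+\lambda^2(1+\varepsilon)d^2}$. *)

theory Defs
  imports "HOL-Analysis.Analysis"
begin

definition fro_norm :: "real^'c^'r \<Rightarrow> real" where
  "fro_norm M = sqrt (\<Sum>i\<in>UNIV. \<Sum>j\<in>UNIV. (M $ i $ j)^2)"

definition St_eps :: "real \<Rightarrow> (real^'p^'n) set" where
  "St_eps \<epsilon> = {X. fro_norm (transpose X ** X - mat 1) \<le> \<epsilon>}"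

definition Q_fun :: "real \<Rightarrow> real \<Rightarrow> real \<Rightarrow> real" where
  "Q_fun lam \<epsilon> atil = Inf ((\<lambda>(a, d). (lam * (1 - \<epsilon>) * d + a * sqrt ((\<epsilon> - d) / 2))
        / (a^2 + lam^2 * (1 + \<epsilon>) * d^2)) ` ({0<..atil} \<times> {0<..\<epsilon>}))"

definition eta_star :: "real \<Rightarrow> real \<Rightarrow> real \<Rightarrow> real" where
  "eta_star atil \<epsilon> lam = min (Q_fun lam \<epsilon> atil) (1 / (2 * lam))"

end

theory Submission
  imports Defs
begin

text \<open>
  Write \<open>S = X\<^sup>T X - I\<close> and \<open>M = A X + \<lambda> X S\<close> for the update direction. Skew-symmetry of \<open>A\<close>
  cancels the \<open>A\<close>-terms in the Gram matrix of \<open>X - \<eta> M\<close>, leaving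
  \<open>S - 2\<eta>\<lambda> (S + S\<^sup>2) + \<eta>\<^sup>2 M\<^sup>T M\<close>. For \<open>d = \<parallel>S\<parallel> \<le> \<epsilon>\<close> and \<open>2\<eta>\<lambda> \<le> 1\<close> the first part has norm
  at most \<open>(1 - 2\<eta>\<lambda>(1 - \<epsilon>)) d\<close>, and \<open>\<parallel>M\<parallel>\<^sup>2 \<le> 2 (atil\<^sup>2 + \<lambda>\<^sup>2 (1 + \<epsilon>) d\<^sup>2)\<close>. The resulting
  bound on the new defect is a convex quadratic in \<open>d\<close>, so it stays below \<open>\<epsilon>\<close> on \<open>[0, \<epsilon>]\<close> as
  soon as it does at both endpoints; taking \<open>a = atil\<close>, these two conditions are what \<open>\<eta> \<le> Q\<close>
  gives in the limit \<open>d \<rightarrow> 0\<close> and at \<open>d = \<epsilon>\<close>.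
\<close>

lemma norm_vec_power2: "(norm (x :: 'a::real_normed_vector^'n))\<^sup>2 = (\<Sum>i\<in>UNIV. (norm (x $ i))\<^sup>2)"
  by (simp add: norm_vec_def L2_set_def sum_nonneg)

lemma fro_norm_eq_norm: "fro_norm (M :: real^'c^'r) = norm M"
  by (simp add: fro_norm_def norm_vec_def L2_set_def sum_nonneg)

lemma norm_transpose: "norm (transpose (A :: real^'m^'n)) = norm A"
proof -
  have "(norm (transpose A))\<^sup>2 = (norm A)\<^sup>2"
    by (simp add: norm_vec_power2 transpose_def) (rule sum.swap)
  then show ?thesis
    by (simp add: power2_eq_iff_nonneg)
qed

lemma norm_power2_columns: "(norm (A :: real^'m^'n))\<^sup>2 = (\<Sum>j\<in>UNIV. (norm (column j A))\<^sup>2)"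
proof -
  have "transpose A $ j = column j A" for j
    by (simp add: transpose_def column_def)
  then show ?thesis
    using norm_vec_power2[of "transpose A"] by (simp add: norm_transpose)
qed

lemma column_matrix_mult: "column j (A ** B) = A *v column j B"
  by (simp add: column_def matrix_matrix_mult_def matrix_vector_mult_def)

lemma norm_matrix_vector_mult_le: "norm ((A :: real^'m^'n) *v x) \<le> norm A * norm x"
proof -
  have "(norm (A *v x))\<^sup>2 = (\<Sum>i\<in>UNIV. (inner (A $ i) x)\<^sup>2)"
    by (simp add: norm_vec_power2 matrix_vector_mul_component)
  also have "\<dots> \<le> (\<Sum>i\<in>UNIV. (norm (A $ i))\<^sup>2 * (norm x)\<^sup>2)"
    by (intro sum_mono) (metis Cauchy_Schwarz_ineq2 abs_ge_zero power2_abs power_mono power_mult_distrib)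
  also have "\<dots> = (norm A * norm x)\<^sup>2"
    by (simp add: norm_vec_power2[of A] sum_distrib_right power_mult_distrib)
  finally show ?thesis
    by (rule power2_le_imp_le) simp
qed

lemma norm_matrix_mult_le: "norm ((A :: real^'m^'n) ** (B :: real^'p^'m)) \<le> norm A * norm B"
proof -
  have "(norm (A ** B))\<^sup>2 = (\<Sum>j\<in>UNIV. (norm (A *v column j B))\<^sup>2)"
    by (simp add: norm_power2_columns column_matrix_mult)
  also have "\<dots> \<le> (\<Sum>j\<in>UNIV. (norm A)\<^sup>2 * (norm (column j B))\<^sup>2)"
    by (intro sum_mono) (metis norm_matrix_vector_mult_le norm_ge_zero power_mono power_mult_distrib)
  also have "\<dots> = (norm A * norm B)\<^sup>2"
    by (simp add: norm_power2_columns[of B] sum_distrib_left power_mult_distrib)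
  finally show ?thesis
    by (rule power2_le_imp_le) simp
qed

lemma bounded_bilinear_matrix_mult:
  "bounded_bilinear ((**) :: real^'m^'n \<Rightarrow> real^'p^'m \<Rightarrow> real^'p^'n)"
proof
  show "\<exists>K. \<forall>A B. norm ((A :: real^'m^'n) ** (B :: real^'p^'m)) \<le> norm A * norm B * K"
    using norm_matrix_mult_le by (metis mult.right_neutral)
qed (simp_all add: matrix_matrix_mult_def vec_eq_iff sum.distrib distrib_left distrib_right
       sum_distrib_left mult_ac)

lemmas matrix_mult_add_left = bounded_bilinear.add_left[OF bounded_bilinear_matrix_mult]
lemmas matrix_mult_diff_left = bounded_bilinear.diff_left[OF bounded_bilinear_matrix_mult]
lemmas matrix_mult_diff_right = bounded_bilinear.diff_right[OF bounded_bilinear_matrix_mult]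
lemmas matrix_mult_minus_right = bounded_bilinear.minus_right[OF bounded_bilinear_matrix_mult]
lemmas matrix_mult_scaleR_left = bounded_bilinear.scaleR_left[OF bounded_bilinear_matrix_mult]
lemmas matrix_mult_scaleR_right = bounded_bilinear.scaleR_right[OF bounded_bilinear_matrix_mult]

lemma transpose_add: "transpose ((A :: real^'m^'n) + B) = transpose A + transpose B"
  by (simp add: transpose_def vec_eq_iff)

lemma transpose_diff: "transpose ((A :: real^'m^'n) - B) = transpose A - transpose B"
  by (simp add: transpose_def vec_eq_iff)

definition gram_defect :: "real^'p^'n \<Rightarrow> real^'p^'p" where
  "gram_defect X = transpose X ** X - mat 1"

definition landing_field :: "real^'n^'n \<Rightarrow> real \<Rightarrow> real^'p^'n \<Rightarrow> real^'p^'n" where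
  "landing_field A lam X = A ** X + lam *\<^sub>R (X ** gram_defect X)"

lemma St_eps_iff_norm_gram_defect: "X \<in> St_eps \<epsilon> \<longleftrightarrow> norm (gram_defect X) \<le> \<epsilon>"
  by (simp add: St_eps_def gram_defect_def fro_norm_eq_norm)

lemma norm_matrix_vector_mult_power2_le_gram_defect:
  fixes X :: "real^'p^'n"
  shows "(norm (X *v v))\<^sup>2 \<le> (1 + norm (gram_defect X)) * (norm v)\<^sup>2"
proof -
  let ?S = "gram_defect X"
  have "(norm (X *v v))\<^sup>2 = inner v (transpose X *v (X *v v))"
    unfolding power2_norm_eq_inner by (metis dot_lmul_matrix vector_transpose_matrix)
  also have "\<dots> = inner v ((transpose X ** X) *v v)"
    by (simp only: matrix_vector_mul_assoc)
  also have "\<dots> = (norm v)\<^sup>2 + inner v (?S *v v)"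
    by (simp add: gram_defect_def matrix_vector_mult_diff_rdistrib inner_diff_right power2_norm_eq_inner)
  also have "\<dots> \<le> (norm v)\<^sup>2 + norm v * norm (?S *v v)"
    by (simp add: norm_cauchy_schwarz)
  also have "\<dots> \<le> (norm v)\<^sup>2 + norm v * (norm ?S * norm v)"
    by (simp add: mult_left_mono norm_matrix_vector_mult_le)
  finally show ?thesis
    by (simp add: algebra_simps power2_eq_square)
qed

lemma norm_matrix_mult_power2_le_gram_defect:
  fixes X :: "real^'p^'n" and B :: "real^'q^'p"
  shows "(norm (X ** B))\<^sup>2 \<le> (1 + norm (gram_defect X)) * (norm B)\<^sup>2"
proof -
  have "(norm (X ** B))\<^sup>2 = (\<Sum>j\<in>UNIV. (norm (X *v column j B))\<^sup>2)"
    by (simp add: norm_power2_columns column_matrix_mult)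
  also have "\<dots> \<le> (\<Sum>j\<in>UNIV. (1 + norm (gram_defect X)) * (norm (column j B))\<^sup>2)"
    by (intro sum_mono norm_matrix_vector_mult_power2_le_gram_defect)
  also have "\<dots> = (1 + norm (gram_defect X)) * (norm B)\<^sup>2"
    by (simp add: norm_power2_columns[of B] sum_distrib_left)
  finally show ?thesis .
qed

lemma gram_defect_landing_step:
  fixes A :: "real^'n^'n" and X :: "real^'p^'n" and lam \<eta> :: real
  assumes skew: "transpose A = - A"
  defines "S \<equiv> gram_defect X" and "M \<equiv> landing_field A lam X"
  shows "gram_defect (X - \<eta> *\<^sub>R M)
       = S - (2 * \<eta> * lam) *\<^sub>R (S + S ** S) + \<eta>\<^sup>2 *\<^sub>R (transpose M ** M)"
proof -
  have gram: "transpose X ** X = mat 1 + S"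
    by (simp add: S_def gram_defect_def)
  have "transpose S = S"
    by (simp add: S_def gram_defect_def transpose_diff matrix_transpose_mul)
  have XM: "transpose X ** M = transpose X ** A ** X + lam *\<^sub>R (S + S ** S)"
    by (simp add: M_def landing_field_def matrix_add_ldistrib matrix_mult_scaleR_right
        matrix_mul_assoc gram matrix_mult_add_left flip: S_def)
  have "transpose M = lam *\<^sub>R (S ** transpose X) - transpose X ** A"
    by (simp add: M_def landing_field_def transpose_add transpose_scalar
        matrix_transpose_mul skew \<open>transpose S = S\<close> matrix_mult_minus_right flip: S_def)
  then have MX: "transpose M ** X = - (transpose X ** A ** X) + lam *\<^sub>R (S + S ** S)"
    by (simp add: matrix_mult_diff_left matrix_mult_scaleR_left gram matrix_add_ldistrib
        flip: matrix_mul_assoc)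
  have "gram_defect (X - \<eta> *\<^sub>R M) = transpose X ** X - \<eta> *\<^sub>R (transpose X ** M)
      - \<eta> *\<^sub>R (transpose M ** X) + \<eta>\<^sup>2 *\<^sub>R (transpose M ** M) - mat 1"
    by (simp add: gram_defect_def transpose_diff transpose_scalar
        matrix_mult_diff_left matrix_mult_diff_right matrix_mult_scaleR_left matrix_mult_scaleR_right
        algebra_simps power2_eq_square)
  also have "\<dots> = S - (2 * \<eta> * lam) *\<^sub>R (S + S ** S) + \<eta>\<^sup>2 *\<^sub>R (transpose M ** M)"
    unfolding XM MX gram by (simp add: algebra_simps scaleR_2 flip: scaleR_add_left scaleR_scaleR)
  finally show ?thesis .
qed

lemma norm_damped_gram_defect_le:
  fixes S :: "real^'p^'p"
  assumes "0 \<le> c" "c \<le> 1" "norm S \<le> \<epsilon>"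
  shows "norm (S - c *\<^sub>R (S + S ** S)) \<le> (1 - c * (1 - \<epsilon>)) * norm S"
proof -
  have "norm (S - c *\<^sub>R (S + S ** S)) = norm ((1 - c) *\<^sub>R S - c *\<^sub>R (S ** S))"
    by (simp add: algebra_simps)
  also have "\<dots> \<le> (1 - c) * norm S + c * (norm S * norm S)"
    using assms norm_matrix_mult_le[of S S]
    by (intro order_trans[OF norm_triangle_ineq4]) (simp add: mult_left_mono)
  also have "\<dots> \<le> (1 - c) * norm S + c * (\<epsilon> * norm S)"
    using assms by (intro add_left_mono mult_left_mono mult_right_mono) auto
  finally show ?thesis
    by (simp add: algebra_simps)
qed

lemma norm_landing_field_power2_le:
  "(norm (landing_field A lam X))\<^sup>2
     \<le> 2 * ((norm (A ** X))\<^sup>2 + lam\<^sup>2 * (1 + norm (gram_defect X)) * (norm (gram_defect X))\<^sup>2)"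
proof -
  have sum_power2_le: "(x + y)\<^sup>2 \<le> 2 * (x\<^sup>2 + y\<^sup>2)" for x y :: real
    using sum_squares_bound[of x y] by (simp add: power2_sum)
  have "(norm (landing_field A lam X))\<^sup>2 \<le> (norm (A ** X) + \<bar>lam\<bar> * norm (X ** gram_defect X))\<^sup>2"
    unfolding landing_field_def by (intro power_mono norm_triangle_le) auto
  also have "\<dots> \<le> 2 * ((norm (A ** X))\<^sup>2 + (\<bar>lam\<bar> * norm (X ** gram_defect X))\<^sup>2)"
    by (rule sum_power2_le)
  also have "\<dots> = 2 * ((norm (A ** X))\<^sup>2 + lam\<^sup>2 * (norm (X ** gram_defect X))\<^sup>2)"
    by (simp add: power_mult_distrib)
  also have "\<dots> \<le> 2 * ((norm (A ** X))\<^sup>2 + lam\<^sup>2 * (1 + norm (gram_defect X)) * (norm (gram_defect X))\<^sup>2)"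
    using norm_matrix_mult_power2_le_gram_defect[of X "gram_defect X"]
    by (simp add: mult_left_mono mult.assoc)
  finally show ?thesis .
qed

lemma convex_quadratic_nonpos_between:
  fixes \<alpha> \<beta> \<gamma> d e :: real
  assumes "0 \<le> \<alpha>" "\<gamma> \<le> 0" "\<alpha> * e\<^sup>2 + \<beta> * e + \<gamma> \<le> 0" "0 \<le> d" "d \<le> e"
  shows "\<alpha> * d\<^sup>2 + \<beta> * d + \<gamma> \<le> 0"
proof (cases "e = 0")
  case True
  with assms show ?thesis by simp
next
  case False
  have "(e - d) * \<gamma> \<le> 0" "d * (\<alpha> * e\<^sup>2 + \<beta> * e + \<gamma>) \<le> 0" "\<alpha> * e * d * (d - e) \<le> 0"
    using assms by (simp_all add: mult_nonneg_nonpos)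
  moreover have "e * (\<alpha> * d\<^sup>2 + \<beta> * d + \<gamma>)
      = (e - d) * \<gamma> + d * (\<alpha> * e\<^sup>2 + \<beta> * e + \<gamma>) + \<alpha> * e * d * (d - e)"
    by (simp add: algebra_simps power2_eq_square)
  ultimately have "e * (\<alpha> * d\<^sup>2 + \<beta> * d + \<gamma>) \<le> 0"
    by linarith
  then show ?thesis
    using False assms by (simp add: mult_le_0_iff)
qed

lemma eta_star_le_quotient:
  assumes "\<epsilon> \<le> 1" "0 \<le> lam" "0 < a" "a \<le> atil" "0 < d" "d \<le> \<epsilon>"
  shows "eta_star atil \<epsilon> lam
           \<le> (lam * (1 - \<epsilon>) * d + a * sqrt ((\<epsilon> - d) / 2)) / (a\<^sup>2 + lam\<^sup>2 * (1 + \<epsilon>) * d\<^sup>2)"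
proof -
  let ?f = "\<lambda>(a, d). (lam * (1 - \<epsilon>) * d + a * sqrt ((\<epsilon> - d) / 2)) / (a\<^sup>2 + lam\<^sup>2 * (1 + \<epsilon>) * d\<^sup>2)"
  have "bdd_below (?f ` ({0<..atil} \<times> {0<..\<epsilon>}))"
    using assms by (intro bdd_belowI[of _ 0]) auto
  then have "Q_fun lam \<epsilon> atil \<le> ?f (a, d)"
    unfolding Q_fun_def by (rule cINF_lower) (use assms in auto)
  then show ?thesis
    by (simp add: eta_star_def)
qed

lemma eta_star_le_sqrt:
  assumes "0 < \<epsilon>" "\<epsilon> \<le> 1" "0 \<le> lam" "0 < atil"
  shows "eta_star atil \<epsilon> lam \<le> sqrt (\<epsilon> / 2) / atil"
proof -
  define F where "F d = (lam * (1 - \<epsilon>) * d + atil * sqrt ((\<epsilon> - d) / 2))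
                          / (atil\<^sup>2 + lam\<^sup>2 * (1 + \<epsilon>) * d\<^sup>2)" for d
  have "(F \<longlongrightarrow> F 0) (at_right 0)"
    unfolding F_def using assms by (intro tendsto_intros) auto
  moreover have "eventually (\<lambda>d. eta_star atil \<epsilon> lam \<le> F d) (at_right 0)"
    unfolding eventually_at_right_field F_def
    using assms by (intro exI[of _ \<epsilon>]) (auto intro!: eta_star_le_quotient)
  ultimately have "eta_star atil \<epsilon> lam \<le> F 0"
    by (rule tendsto_lowerbound) simp
  then show ?thesis
    using assms by (simp add: F_def power2_eq_square)
qed

lemma landing_step_size_bound:
  assumes eps: "0 < \<epsilon>" "\<epsilon> < 1" and "0 < lam" "0 < atil"
    and \<eta>: "0 < \<eta>" "\<eta> \<le> eta_star atil \<epsilon> lam"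
    and d: "0 \<le> d" "d \<le> \<epsilon>"
  shows "(1 - 2 * \<eta> * lam * (1 - \<epsilon>)) * d + 2 * \<eta>\<^sup>2 * (atil\<^sup>2 + lam\<^sup>2 * (1 + \<epsilon>) * d\<^sup>2) \<le> \<epsilon>"
proof -
  have "\<eta> \<le> sqrt (\<epsilon> / 2) / atil"
    using eta_star_le_sqrt[of \<epsilon> lam atil] assms by simp
  then have "\<eta> * atil \<le> sqrt (\<epsilon> / 2)"
    using assms by (simp add: field_simps)
  then have "(\<eta> * atil)\<^sup>2 \<le> (sqrt (\<epsilon> / 2))\<^sup>2"
    using assms by (intro power_mono) auto
  then have "(\<eta> * atil)\<^sup>2 \<le> \<epsilon> / 2"
    using eps by simp
  then have at_0: "2 * \<eta>\<^sup>2 * atil\<^sup>2 - \<epsilon> \<le> 0"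
    by (simp add: power_mult_distrib)
  have "\<eta> \<le> lam * (1 - \<epsilon>) * \<epsilon> / (atil\<^sup>2 + lam\<^sup>2 * (1 + \<epsilon>) * \<epsilon>\<^sup>2)"
    using eta_star_le_quotient[of \<epsilon> lam atil atil \<epsilon>] assms by simp
  then have "\<eta> * (atil\<^sup>2 + lam\<^sup>2 * (1 + \<epsilon>) * \<epsilon>\<^sup>2) \<le> lam * (1 - \<epsilon>) * \<epsilon>"
    using assms by (simp add: field_simps add_pos_nonneg)
  then have "2 * \<eta> * (\<eta> * (atil\<^sup>2 + lam\<^sup>2 * (1 + \<epsilon>) * \<epsilon>\<^sup>2)) \<le> 2 * \<eta> * (lam * (1 - \<epsilon>) * \<epsilon>)"
    using \<eta> by simp
  then have at_\<epsilon>: "2 * \<eta>\<^sup>2 * lam\<^sup>2 * (1 + \<epsilon>) * \<epsilon>\<^sup>2 + (1 - 2 * \<eta> * lam * (1 - \<epsilon>)) * \<epsilon>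
                     + (2 * \<eta>\<^sup>2 * atil\<^sup>2 - \<epsilon>) \<le> 0"
    by (simp add: algebra_simps power2_eq_square)
  have "2 * \<eta>\<^sup>2 * lam\<^sup>2 * (1 + \<epsilon>) * d\<^sup>2 + (1 - 2 * \<eta> * lam * (1 - \<epsilon>)) * d
          + (2 * \<eta>\<^sup>2 * atil\<^sup>2 - \<epsilon>) \<le> 0"
    using eps by (intro convex_quadratic_nonpos_between[OF _ at_0 at_\<epsilon> d]) auto
  then show ?thesis
    by (simp add: algebra_simps)
qed

lemma landing_step_in_St_eps:
  fixes A :: "real^'n^'n" and X :: "real^'p^'n"
  assumes "0 < \<epsilon>" "\<epsilon> < 1" and lam: "0 < lam" and "0 < atil"
    and skew: "transpose A = - A" and AX: "norm (A ** X) \<le> atil" and X: "X \<in> St_eps \<epsilon>"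
    and \<eta>: "0 < \<eta>" "\<eta> \<le> eta_star atil \<epsilon> lam"
  shows "X - \<eta> *\<^sub>R landing_field A lam X \<in> St_eps \<epsilon>"
proof -
  define S where "S = gram_defect X"
  define M where "M = landing_field A lam X"
  define c where "c = 2 * \<eta> * lam"
  have d: "0 \<le> norm S" "norm S \<le> \<epsilon>"
    using X by (simp_all add: S_def St_eps_iff_norm_gram_defect)
  have c: "0 \<le> c" "c \<le> 1"
    using \<eta> lam by (auto simp: c_def eta_star_def field_simps)
  have "(norm M)\<^sup>2 \<le> 2 * ((norm (A ** X))\<^sup>2 + lam\<^sup>2 * (1 + norm S) * (norm S)\<^sup>2)"
    unfolding M_def S_def by (rule norm_landing_field_power2_le)
  also have "\<dots> \<le> 2 * (atil\<^sup>2 + lam\<^sup>2 * (1 + \<epsilon>) * (norm S)\<^sup>2)"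
    using AX d by (intro mult_left_mono add_mono power_mono mult_right_mono) auto
  finally have M: "(norm M)\<^sup>2 \<le> 2 * (atil\<^sup>2 + lam\<^sup>2 * (1 + \<epsilon>) * (norm S)\<^sup>2)" .
  have "norm (\<eta>\<^sup>2 *\<^sub>R (transpose M ** M)) \<le> \<eta>\<^sup>2 * (norm M)\<^sup>2"
    using norm_matrix_mult_le[of "transpose M" M]
    by (simp add: norm_transpose power2_eq_square mult_left_mono)
  also have "\<dots> \<le> 2 * \<eta>\<^sup>2 * (atil\<^sup>2 + lam\<^sup>2 * (1 + \<epsilon>) * (norm S)\<^sup>2)"
    using mult_left_mono[OF M zero_le_power2[of \<eta>]] by (simp add: algebra_simps)
  finally have MM: "norm (\<eta>\<^sup>2 *\<^sub>R (transpose M ** M))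
                     \<le> 2 * \<eta>\<^sup>2 * (atil\<^sup>2 + lam\<^sup>2 * (1 + \<epsilon>) * (norm S)\<^sup>2)" .
  have "gram_defect (X - \<eta> *\<^sub>R M) = S - c *\<^sub>R (S + S ** S) + \<eta>\<^sup>2 *\<^sub>R (transpose M ** M)"
    unfolding S_def M_def c_def by (rule gram_defect_landing_step[OF skew])
  then have "norm (gram_defect (X - \<eta> *\<^sub>R M))
      \<le> norm (S - c *\<^sub>R (S + S ** S)) + norm (\<eta>\<^sup>2 *\<^sub>R (transpose M ** M))"
    by (simp only: norm_triangle_ineq)
  also have "\<dots> \<le> (1 - c * (1 - \<epsilon>)) * norm S + 2 * \<eta>\<^sup>2 * (atil\<^sup>2 + lam\<^sup>2 * (1 + \<epsilon>) * (norm S)\<^sup>2)"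
    using norm_damped_gram_defect_le[OF c d(2)] MM by (rule add_mono)
  also have "\<dots> \<le> \<epsilon>"
    unfolding c_def using assms d by (intro landing_step_size_bound) auto
  finally show ?thesis
    by (simp add: M_def St_eps_iff_norm_gram_defect)
qed

theorem proposition5:
  fixes Acal :: "nat \<Rightarrow> (real^'p^'n) list \<Rightarrow> real^'n^'n"
    and X :: "nat \<Rightarrow> real^'p^'n"
    and \<eta> :: "nat \<Rightarrow> real"
    and \<epsilon> lam atil :: real
  assumes np: "CARD('p) \<le> CARD('n)"
    and eps: "0 < \<epsilon>" "\<epsilon> < 1"
    and lam: "0 < lam"
    and atil: "0 < atil"
    and skew: "\<And>k xs. length xs = Suc k \<Longrightarrow> transpose (Acal k xs) = - Acal k xs"
    and bound: "\<And>k xs. length xs = Suc k \<Longrightarrow> (\<forall>Y\<in>set xs. Y \<in> St_eps \<epsilon>) \<Longrightarrow>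
                   fro_norm (Acal k xs ** last xs) \<le> atil"
    and X0: "X 0 \<in> St_eps \<epsilon>"
    and rec: "\<And>k. X (Suc k) = X k - \<eta> k *\<^sub>R
                 (Acal k (map X [0..<Suc k]) ** X k + lam *\<^sub>R (X k ** (transpose (X k) ** X k - mat 1)))"
    and eta_pos: "\<And>k. 0 < \<eta> k"
    and eta_le: "\<And>k. \<eta> k \<le> eta_star atil \<epsilon> lam"
  shows "\<forall>k. X k \<in> St_eps \<epsilon>"
proof
  fix k
  show "X k \<in> St_eps \<epsilon>"
  proof (induction k rule: less_induct)
    case (less k)
    show ?case
    proof (cases k)
      case 0
      with X0 show ?thesis by simp
    next
      case (Suc j)
      let ?xs = "map X [0..<Suc j]"
      have "\<forall>Y\<in>set ?xs. Y \<in> St_eps \<epsilon>"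
        using less Suc by auto
      then have "norm (Acal j ?xs ** X j) \<le> atil"
        using bound[of ?xs j] by (simp add: fro_norm_eq_norm)
      moreover have "X j \<in> St_eps \<epsilon>"
        using less Suc by simp
      ultimately have "X j - \<eta> j *\<^sub>R landing_field (Acal j ?xs) lam (X j) \<in> St_eps \<epsilon>"
        by (intro landing_step_in_St_eps[OF eps lam atil skew[of ?xs j] _ _ eta_pos eta_le]) simp_all
      then show ?thesis
        by (simp only: Suc rec landing_field_def gram_defect_def)
    qed
  qed
qed

end
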